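(* Let $\mathbb F$ be a field, $d\ge 1$ and $1\le m\le d$ integers, $\sigma\in\mathbb Z^d$ a signature vector, $\psi=(\psi_1,\dots,\psi_d)\in\mathbb F^d$, and let $\mathbf D$ be a $(d;m)$ signed determinant message matrix with signature $\sigma$ (for any admissible choice of its symbols). Let $\Xi=\Xi^{(m)}_{\sigma,\psi}$ be the repair-encoder matrix. Then for every $m$-subset $\mathcal I\subseteq[d]$, $$\sum_{y=1}^{d}\psi_y\,\mathbf D_{y,\mathcal I}=\sum_{i\in\mathcal I}(-1)^{\sigma(i)+\mathrm{ind}_{\mathcal I}(i)}\,[\mathbf D\,\Xi]_{i,\mathcal I\setminus\{i\}}.$$
   Context: Notation: $[d]=\{1,\dots,d\}$; for a finite set $\mathcal I$ of integers and an integer $x$, $\mathrm{ind}_{\mathcal I}(x)=|\{y\in\mathcal I: y\le x\}|$. $(d;m)$ signed determinant message matrix with signature $\sigma$: choose values $v_{x,\mathcal X}\in\mathbb F$ for every $m$-subset $\mathcal X\subseteq[d]$ and $x\in\mathcal X$, and values $w_{y,\mathcal Y}\in\mathbb F$ for every $(m+1)$-subset $\mathcal Y\subseteq[d]$ and $y\in\mathcal Y$, such that for every such $\mathcal Y$ the parity equation $\sum_{y\in\mathcal Y}(-1)^{\mathrm{ind}_{\mathcal Y}(y)}w_{y,\mathcal Y}=0$ holds (the values $w_{y,\mathcal Y}$ with $y<\max\mathcal Y$ and all $v$'s are free; $w_{\max\mathcal Y,\mathcal Y}$ is determined by the parity equation). $\mathbf D$ has rows indexed by $x\in[d]$ and columns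 indexed by $m$-subsets $\mathcal I\subseteq[d]$, with $\mathbf D_{x,\mathcal I}=(-1)^{\sigma(x)}v_{x,\mathcal I}$ if $x\in\mathcal I$ and $\mathbf D_{x,\mathcal I}=(-1)^{\sigma(x)}w_{x,\mathcal I\cup\{x\}}$ if $x\notin\mathcal I$. (For $m=0$, $\mathbf D$ is the all-zero $d\times 1$ matrix with column indexed by $\varnothing$.) Repair-encoder matrix $\Xi^{(m)}_{\sigma,\psi}$: rows indexed by $m$-subsets $\mathcal I\subseteq[d]$, columns by $(m-1)$-subsets $\mathcal J\subseteq[d]$, with entry $(-1)^{\sigma(y)+\mathrm{ind}_{\mathcal I}(y)}\psi_y$ if $\mathcal J\subseteq\mathcal I$ and $\mathcal I\setminus\mathcal J=\{y\}$, and $0$ otherwise. *)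

theory Defs
  imports Main
begin

definition ind :: "nat set \<Rightarrow> nat \<Rightarrow> nat" where
  "ind I x = card {y \<in> I. y \<le> x}"

definition subsets_of :: "nat \<Rightarrow> nat \<Rightarrow> nat set set" where
  "subsets_of d k = {X. X \<subseteq> {1..d} \<and> card X = k}"

definition parity_ok :: "nat \<Rightarrow> nat \<Rightarrow> (nat \<Rightarrow> nat set \<Rightarrow> 'a::field) \<Rightarrow> bool" where
  "parity_ok d m w \<longleftrightarrow>
     (\<forall>Y \<in> subsets_of d (m+1). (\<Sum>y\<in>Y. (-1) ^ ind Y y * w y Y) = 0)"

definition sdmm :: "(nat \<Rightarrow> int) \<Rightarrow> (nat \<Rightarrow> nat set \<Rightarrow> 'a::field) \<Rightarrow> (nat \<Rightarrow> nat set \<Rightarrow> 'a)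
                     \<Rightarrow> nat \<Rightarrow> nat set \<Rightarrow> 'a" where
  "sdmm \<sigma> v w x I = (-1) powi \<sigma> x * (if x \<in> I then v x I else w x (insert x I))"

definition Xi :: "(nat \<Rightarrow> int) \<Rightarrow> (nat \<Rightarrow> 'a::field) \<Rightarrow> nat set \<Rightarrow> nat set \<Rightarrow> 'a" where
  "Xi \<sigma> \<psi> I J = (if J \<subseteq> I \<and> (\<exists>y. I - J = {y})
      then (let y = the_elem (I - J) in (-1) powi (\<sigma> y + int (ind I y)) * \<psi> y)
      else 0)"

definition DXi :: "nat \<Rightarrow> nat \<Rightarrow> (nat \<Rightarrow> int) \<Rightarrow> (nat \<Rightarrow> 'a::field) \<Rightarrow> (nat \<Rightarrow> nat set \<Rightarrow> 'a)
                   \<Rightarrow> (nat \<Rightarrow> nat set \<Rightarrow> 'a) \<Rightarrow> nat \<Rightarrow> nat set \<Rightarrow> 'a" where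
  "DXi d m \<sigma> \<psi> v w x J = (\<Sum>K\<in>subsets_of d m. sdmm \<sigma> v w x K * Xi \<sigma> \<psi> K J)"

end

theory Submission
  imports Defs
begin

text \<open>Column \<open>J\<close> of \<open>\<Xi>\<close> is supported on the rows \<open>J \<union> {y}\<close> with \<open>y \<notin> J\<close>, so
  \<open>[D \<Xi>](i, I - {i})\<close> is a sum over \<open>y \<notin> I - {i}\<close>. After multiplication by the sign of \<open>i\<close>
  in \<open>I\<close>, the term \<open>y = i\<close> becomes \<open>\<psi> i * D(i, I)\<close>, because the sign squares to one.
  The terms with \<open>y \<notin> I\<close> only involve the symbols \<open>w(i, I \<union> {y})\<close>: exchanging \<open>i\<close> for \<open>y\<close>
  shifts the combined index count by exactly one against the indices inside \<open>I \<union> {y}\<close>, so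
  their sum over \<open>i \<in> I\<close> is, by the parity equation of \<open>I \<union> {y}\<close>, the remaining symbol
  \<open>w(y, I \<union> {y})\<close>; this is \<open>\<psi> y * D(y, I)\<close> after the factor \<open>\<psi> y\<close>.\<close>

lemma minus_one_power_int_square: "((-1::'a::field) powi s) * (-1) powi s = 1"
  by (simp flip: power_int_mult_distrib)

lemma ind_insert:
  assumes "finite A" "x \<notin> A"
  shows "ind (insert x A) z = ind A z + (if x \<le> z then 1 else 0)"
proof -
  have "{y \<in> insert x A. y \<le> z} = (if x \<le> z then insert x {y \<in> A. y \<le> z} else {y \<in> A. y \<le> z})"
    by auto
  then show ?thesis unfolding ind_def using assms by simp
qed

lemma ind_insert_swap:
  assumes "finite I" "i \<in> I" "y \<notin> I"
  shows "ind (insert y I) i + ind (insert y I) y = ind I i + ind (insert y (I - {i})) y + 1"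
proof -
  have "i \<noteq> y" using assms by auto
  have "insert y I = insert i (insert y (I - {i}))" using assms(2) by auto
  then have "ind (insert y I) y = ind (insert y (I - {i})) y + (if i \<le> y then 1 else 0)"
    using assms \<open>i \<noteq> y\<close> ind_insert[of "insert y (I - {i})" i y] by simp
  moreover have "ind (insert y I) i = ind I i + (if y \<le> i then 1 else 0)"
    using assms ind_insert by blast
  ultimately show ?thesis using \<open>i \<noteq> y\<close> by auto
qed

lemma parity_equation_solve:
  fixes w :: "nat \<Rightarrow> nat set \<Rightarrow> 'a::field"
  assumes "finite I" "y \<notin> I"
    and parity: "(\<Sum>x\<in>insert y I. (-1) ^ ind (insert y I) x * w x (insert y I)) = 0"
  shows "(\<Sum>i\<in>I. (-1) ^ (ind I i + ind (insert y (I - {i})) y) * w i (insert y I))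
       = w y (insert y I)"
proof -
  let ?Y = "insert y I"
  have "(\<Sum>i\<in>I. (-1) ^ (ind I i + ind (insert y (I - {i})) y) * w i ?Y)
      = - ((-1) ^ ind ?Y y * (\<Sum>i\<in>I. (-1) ^ ind ?Y i * w i ?Y))"
    unfolding sum_distrib_left sum_negf[symmetric]
  proof (rule sum.cong[OF refl])
    fix i assume "i \<in> I"
    have "(-1::'a) ^ (ind I i + ind (insert y (I - {i})) y) = - ((-1) ^ (ind ?Y i + ind ?Y y))"
      unfolding ind_insert_swap[OF assms(1) \<open>i \<in> I\<close> assms(2)] by simp
    then show "(-1) ^ (ind I i + ind (insert y (I - {i})) y) * w i ?Y
        = - ((-1) ^ ind ?Y y * ((-1) ^ ind ?Y i * w i ?Y))"
      by (simp add: power_add mult_ac)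
  qed
  also have "(\<Sum>i\<in>I. (-1) ^ ind ?Y i * w i ?Y) = - ((-1) ^ ind ?Y y * w y ?Y)"
    using parity assms by (simp add: add_eq_0_iff)
  finally show ?thesis by (simp flip: mult.assoc power_add)
qed

lemma Xi_insert:
  "y \<notin> J \<Longrightarrow> Xi \<sigma> \<psi> (insert y J) J = (-1) powi (\<sigma> y + int (ind (insert y J) y)) * \<psi> y"
  unfolding Xi_def by (auto simp: Let_def insert_Diff_if)

lemma Xi_eq_0:
  "\<not> (\<exists>y. y \<notin> J \<and> K = insert y J) \<Longrightarrow> Xi \<sigma> \<psi> K J = 0"
  unfolding Xi_def by (auto simp: Let_def)

lemma DXi_eq_sum_insert:
  assumes "J \<in> subsets_of d (m - 1)" "1 \<le> m"
  shows "DXi d m \<sigma> \<psi> v w x J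
       = (\<Sum>y\<in>{1..d} - J. sdmm \<sigma> v w x (insert y J) * Xi \<sigma> \<psi> (insert y J) J)"
proof -
  have J: "J \<subseteq> {1..d}" "finite J" "card J = m - 1"
    using assms(1) by (auto simp: subsets_of_def intro: finite_subset)
  have fin: "finite (subsets_of d m)"
    unfolding subsets_of_def by (rule finite_subset[of _ "Pow {1..d}"]) auto
  have rows: "(\<lambda>y. insert y J) ` ({1..d} - J) \<subseteq> subsets_of d m"
    using J assms(2) by (auto simp: subsets_of_def)
  have "\<not> (\<exists>y. y \<notin> J \<and> K = insert y J)"
    if "K \<in> subsets_of d m - (\<lambda>y. insert y J) ` ({1..d} - J)" for K
    using that by (auto simp: subsets_of_def)
  then have "DXi d m \<sigma> \<psi> v w x J
      = (\<Sum>K\<in>(\<lambda>y. insert y J) ` ({1..d} - J). sdmm \<sigma> v w x K * Xi \<sigma> \<psi> K J)"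
    unfolding DXi_def by (intro sum.mono_neutral_right[OF fin rows]) (simp add: Xi_eq_0)
  also have "\<dots> = (\<Sum>y\<in>{1..d} - J. sdmm \<sigma> v w x (insert y J) * Xi \<sigma> \<psi> (insert y J) J)"
    by (rule sum.reindex_cong[where l="\<lambda>y. insert y J"]) (auto simp: inj_on_def)
  finally show ?thesis .
qed

lemma repair_diagonal_term:
  assumes "i \<in> I"
  shows "(-1) powi (\<sigma> i + int (ind I i)) * (sdmm \<sigma> v w i I * Xi \<sigma> \<psi> I (I - {i}))
       = \<psi> i * sdmm \<sigma> v w i I"
proof -
  have "Xi \<sigma> \<psi> I (I - {i}) = (-1) powi (\<sigma> i + int (ind I i)) * \<psi> i"
    using Xi_insert[of i "I - {i}" \<sigma> \<psi>] assms by (simp add: insert_absorb)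
  then show ?thesis
    by (simp add: mult.left_commute[of "(-1) powi _"] minus_one_power_int_square flip: mult.assoc)
qed

lemma repair_offdiagonal_term:
  assumes "i \<in> I" "y \<notin> I"
  shows "(-1) powi (\<sigma> i + int (ind I i))
           * (sdmm \<sigma> v w i (insert y (I - {i})) * Xi \<sigma> \<psi> (insert y (I - {i})) (I - {i}))
       = \<psi> y * (-1) powi \<sigma> y * ((-1) ^ (ind I i + ind (insert y (I - {i})) y) * w i (insert y I))"
proof -
  let ?K = "insert y (I - {i})"
  have "i \<notin> ?K" "insert i ?K = insert y I" using assms by auto
  then have D: "sdmm \<sigma> v w i ?K = (-1) powi \<sigma> i * w i (insert y I)"
    by (simp add: sdmm_def)
  have X: "Xi \<sigma> \<psi> ?K (I - {i}) = (-1) powi \<sigma> y * (-1) ^ ind ?K y * \<psi> y"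
    using assms by (simp add: Xi_insert power_int_add)
  have S: "(-1::'a) powi (\<sigma> i + int (ind I i)) = (-1) powi \<sigma> i * (-1) ^ ind I i"
    by (simp add: power_int_add)
  have "(-1) powi (\<sigma> i + int (ind I i)) * (sdmm \<sigma> v w i ?K * Xi \<sigma> \<psi> ?K (I - {i}))
      = ((-1) powi \<sigma> i * (-1) powi \<sigma> i)
        * (\<psi> y * (-1) powi \<sigma> y * ((-1) ^ ind I i * (-1) ^ ind ?K y * w i (insert y I)))"
    unfolding D X S by (simp only: mult_ac)
  then show ?thesis by (simp only: minus_one_power_int_square mult_1 power_add)
qed

lemma repair_row_expansion:
  assumes "I \<in> subsets_of d m" "1 \<le> m" "i \<in> I"
  shows "(-1) powi (\<sigma> i + int (ind I i)) * DXi d m \<sigma> \<psi> v w i (I - {i})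
       = \<psi> i * sdmm \<sigma> v w i I
         + (\<Sum>y\<in>{1..d} - I. (-1) powi (\<sigma> i + int (ind I i))
              * (sdmm \<sigma> v w i (insert y (I - {i})) * Xi \<sigma> \<psi> (insert y (I - {i})) (I - {i})))"
proof -
  have I: "I \<subseteq> {1..d}" "finite I" "card I = m"
    using assms(1) by (auto simp: subsets_of_def intro: finite_subset)
  then have "I - {i} \<in> subsets_of d (m - 1)" "{1..d} - (I - {i}) = insert i ({1..d} - I)"
    using assms(3) by (auto simp: subsets_of_def)
  with assms(3) show ?thesis
    by (simp add: DXi_eq_sum_insert[OF _ assms(2)] distrib_left sum_distrib_left insert_absorb
        repair_diagonal_term)
qed

lemma repair_column_sum:
  assumes "parity_ok d m w" "I \<in> subsets_of d m" "y \<in> {1..d} - I"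
  shows "(\<Sum>i\<in>I. (-1) powi (\<sigma> i + int (ind I i))
            * (sdmm \<sigma> v w i (insert y (I - {i})) * Xi \<sigma> \<psi> (insert y (I - {i})) (I - {i})))
       = \<psi> y * sdmm \<sigma> v w y I"
proof -
  have I: "I \<subseteq> {1..d}" "finite I" "card I = m" and "y \<notin> I"
    using assms(2,3) by (auto simp: subsets_of_def intro: finite_subset)
  then have "insert y I \<in> subsets_of d (m + 1)"
    using assms(3) by (auto simp: subsets_of_def)
  then have parity: "(\<Sum>x\<in>insert y I. (-1) ^ ind (insert y I) x * w x (insert y I)) = 0"
    using assms(1) unfolding parity_ok_def by blast
  have "(\<Sum>i\<in>I. (-1) powi (\<sigma> i + int (ind I i))
            * (sdmm \<sigma> v w i (insert y (I - {i})) * Xi \<sigma> \<psi> (insert y (I - {i})) (I - {i})))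
      = \<psi> y * (-1) powi \<sigma> y
        * (\<Sum>i\<in>I. (-1) ^ (ind I i + ind (insert y (I - {i})) y) * w i (insert y I))"
    using \<open>y \<notin> I\<close> by (simp add: repair_offdiagonal_term sum_distrib_left)
  also have "\<dots> = \<psi> y * (-1) powi \<sigma> y * w y (insert y I)"
    using parity_equation_solve[where w = w, OF I(2) \<open>y \<notin> I\<close> parity] by simp
  also have "\<dots> = \<psi> y * sdmm \<sigma> v w y I"
    using \<open>y \<notin> I\<close> by (simp add: sdmm_def)
  finally show ?thesis .
qed

theorem proposition3:
  fixes d m :: nat and \<sigma> :: "nat \<Rightarrow> int" and \<psi> :: "nat \<Rightarrow> 'a::field"
    and v w :: "nat \<Rightarrow> nat set \<Rightarrow> 'a" and I :: "nat set"
  assumes "1 \<le> d" and "1 \<le> m" and "m \<le> d"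
    and "parity_ok d m w"
    and "I \<in> subsets_of d m"
  shows "(\<Sum>y=1..d. \<psi> y * sdmm \<sigma> v w y I) =
         (\<Sum>i\<in>I. (-1) powi (\<sigma> i + int (ind I i)) * DXi d m \<sigma> \<psi> v w i (I - {i}))"
proof -
  have I: "I \<subseteq> {1..d}" using assms(5) by (simp add: subsets_of_def)
  let ?D = "sdmm \<sigma> v w"
  let ?T = "\<lambda>i y. (-1) powi (\<sigma> i + int (ind I i))
              * (?D i (insert y (I - {i})) * Xi \<sigma> \<psi> (insert y (I - {i})) (I - {i}))"
  have "(\<Sum>i\<in>I. (-1) powi (\<sigma> i + int (ind I i)) * DXi d m \<sigma> \<psi> v w i (I - {i}))
      = (\<Sum>i\<in>I. \<psi> i * ?D i I + (\<Sum>y\<in>{1..d} - I. ?T i y))"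
    by (rule sum.cong[OF refl]) (rule repair_row_expansion[OF assms(5,2)])
  also have "\<dots> = (\<Sum>i\<in>I. \<psi> i * ?D i I) + (\<Sum>y\<in>{1..d} - I. \<Sum>i\<in>I. ?T i y)"
    unfolding sum.distrib by (subst sum.swap) (rule refl)
  also have "(\<Sum>y\<in>{1..d} - I. \<Sum>i\<in>I. ?T i y) = (\<Sum>y\<in>{1..d} - I. \<psi> y * ?D y I)"
    by (rule sum.cong[OF refl]) (rule repair_column_sum[OF assms(4,5)])
  also have "(\<Sum>i\<in>I. \<psi> i * ?D i I) + \<dots> = (\<Sum>y=1..d. \<psi> y * ?D y I)"
    using I sum.subset_diff[of I "{1..d}" "\<lambda>y. \<psi> y * ?D y I"] by (simp add: add.commute)
  finally show ?thesis by (rule sym)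
qed

end
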